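(* Let $c,o$ be vertices such that there is a directed path from $c$ to $o$. Put $\delta=\delta_{co}$, and let $\vartheta_{co}$ be the sum of the weights of all shortest directed paths from $c$ to $o$. Let $h(s)=e_o^T\operatorname{adj}(sI+L)e_c$. Then $h$ has degree exactly $N-1-\delta$ and leading coefficient $\vartheta_{co}$, so that $h(s)=\vartheta_{co}\prod_{i=1}^{N-1-\delta}(s+\gamma_i)$ for some $\gamma_1,\dots,\gamma_{N-1-\delta}\in\mathbb C$. Moreover, as rational functions of $s$, $$T_{co}(s)=\vartheta_{co}\,\frac{\big(b(s)q(s)\big)^{1+\delta}\prod_{i=1}^{N-1-\delta}\big(a(s)p(s)+\gamma_i\, b(s)q(s)\big)}{\prod_{i=1}^{N}\big(a(s)p(s)+\lambda_i\, b(s)q(s)\big)},$$ where $\lambda_1,\dots,\lambda_N$ are the eigenvalues of $L$ listed with algebraic multiplicity.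
   Context: Setup (graph). $\mathcal G$ is a weighted directed graph on $\{1,\dots,N\}$ with adjacency matrix $A=[a_{ij}]$. Here $a_{ij}>0$ if there is an arc from $j$ to $i$ (of weight $a_{ij}$), and $a_{ij}=0$ otherwise; there are no self-loops. The Laplacian is $L=D-A$ with $D=\mathrm{diag}(\sum_j a_{ij})$. A directed path from $u$ to $w$ is a sequence of distinct vertices $u=v_0,\dots,v_\ell=w$ with an arc from $v_k$ to $v_{k+1}$ for each $k$. Its length is $\ell$ and its weight is the product of its arc weights (empty product $=1$). $\delta_{uw}$ is the length of a shortest directed path from $u$ to $w$. $e_i$ is the $i$-th canonical basis vector. Setup (agents). Let $a,b,p,q$ be nonzero real polynomials. The open loop is $M(s)=\frac{b(s)q(s)}{a(s)p(s)}$, with plant $G=b/a$ and controller $R=q/p$. The network is $y(s)=M(s)\big[-Ly(s)+r(s)\big]$, where $y,r$ are vectors in $\mathbb C^N$ of signals. $T_{co}(s)$ is the transfer function from the input $r_c$ to the output $y_o$ when all other inputs are zero, i.e. $T_{co}(s)=e_o^T\big(I+M(s)L\big)^{-1}M(s)e_c$ as a rational function. *)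

theory Defs
  imports "Jordan_Normal_Form.Char_Poly" "HOL-Computational_Algebra.Fraction_Field"
begin

text \<open>Graph on vertices 0..N-1 (the paper's 1..N shifted by one), given by the
  adjacency matrix A; A(i,j) > 0 means an arc from j to i of weight A(i,j).\<close>

definition laplacian :: "real mat \<Rightarrow> real mat" where
  "laplacian A = mat (dim_row A) (dim_col A)
     (\<lambda>(i,j). (if i = j then (\<Sum>k<dim_col A. A $$ (i,k)) else 0) - A $$ (i,j))"

definition is_dpath :: "nat \<Rightarrow> real mat \<Rightarrow> nat \<Rightarrow> nat \<Rightarrow> nat list \<Rightarrow> bool" where
  "is_dpath N A u w vs \<longleftrightarrow> vs \<noteq> [] \<and> hd vs = u \<and> last vs = w \<and> distinct vs
     \<and> set vs \<subseteq> {..<N} \<and> (\<forall>k < length vs - 1. A $$ (vs ! (k+1), vs ! k) > 0)"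

definition path_len :: "nat list \<Rightarrow> nat" where
  "path_len vs = length vs - 1"

definition path_weight :: "real mat \<Rightarrow> nat list \<Rightarrow> real" where
  "path_weight A vs = (\<Prod>k < length vs - 1. A $$ (vs ! (k+1), vs ! k))"

definition shortest_dist :: "nat \<Rightarrow> real mat \<Rightarrow> nat \<Rightarrow> nat \<Rightarrow> nat" where
  "shortest_dist N A u w = (LEAST l. \<exists>vs. is_dpath N A u w vs \<and> path_len vs = l)"

definition shortest_weight_sum :: "nat \<Rightarrow> real mat \<Rightarrow> nat \<Rightarrow> nat \<Rightarrow> real" where
  "shortest_weight_sum N A u w =
     (\<Sum>vs \<in> {vs. is_dpath N A u w vs \<and> path_len vs = shortest_dist N A u w}. path_weight A vs)"

definition sI_plus :: "real mat \<Rightarrow> real poly mat" where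
  "sI_plus L = [:0,1:] \<cdot>\<^sub>m 1\<^sub>m (dim_row L) + map_mat (\<lambda>x. [:x:]) L"

definition rf :: "real poly \<Rightarrow> complex poly fract" where
  "rf f = Fract (map_poly complex_of_real f) 1"

definition cf :: "complex poly \<Rightarrow> complex poly fract" where
  "cf f = Fract f 1"

end

theory Submission
  imports Defs "HOL-Computational_Algebra.Polynomial_Factorial"
begin

text \<open>Reading (sI + L) adj(sI + L) = det(sI + L) I coefficientwise from the top degree down
  shows that the coefficient of s^(N-1-k) in adj(sI + L) is sum_(l<=k) e_(N-l) (-L)^(k-l), where
  the e_j are the coefficients of the monic polynomial det(sI + L). The off-diagonal entries of -L
  are the arc weights, and on a walk of minimal length the diagonal of L never contributes, so the
  (d, c) entry of (-L)^m vanishes for m < delta and is theta for m = delta.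

  For the transfer function write x = ap/(bq), so that I + M L = M (xI + L) and
  T_dc = h(x) / det(xI + L). Factoring h and det(sI + L) = prod_i (s + lambda_i) over the complex
  numbers and multiplying numerator and denominator by (bq)^N gives the formula; the surplus
  power (bq)^(1+delta) comes from the difference delta + 1 of the degrees.\<close>

section \<open>Directed paths\<close>

lemma dpath_length_le:
  assumes "is_dpath N A u w vs" shows "length vs \<le> N"
proof -
  have "card (set vs) \<le> card {..<N}" using assms unfolding is_dpath_def by (intro card_mono) auto
  thus ?thesis using assms distinct_card unfolding is_dpath_def by fastforce
qed

lemma dpath_take:
  assumes "is_dpath N A u w vs" "k < length vs"
  shows "is_dpath N A u (vs ! k) (take (Suc k) vs)"
proof -
  have "length vs \<le> Suc k \<Longrightarrow> k = length vs - 1" using assms(2) by linarith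
  with assms show ?thesis unfolding is_dpath_def
    by (auto simp: hd_conv_nth last_conv_nth min_def dest: in_set_takeD)
qed

lemma dpath_snoc:
  assumes "is_dpath N A u j vs" "i < N" "i \<notin> set vs" "A $$ (i, j) > 0"
  shows "is_dpath N A u i (vs @ [i])"
proof -
  have "vs \<noteq> []" and "vs ! (length vs - 1) = j"
    using assms(1) unfolding is_dpath_def by (auto simp: last_conv_nth)
  moreover have "k = length vs - 1" if "k < length vs" "\<not> Suc k < length vs" for k
    using that by linarith
  ultimately show ?thesis using assms
    unfolding is_dpath_def by (auto simp: nth_append)
qed

lemma path_weight_snoc:
  assumes "vs \<noteq> []"
  shows "path_weight A (vs @ [i]) = A $$ (i, last vs) * path_weight A vs"
proof -
  have "path_weight A (vs @ [i]) = (\<Prod>k < Suc (length vs - 1). A $$ ((vs @ [i]) ! (k+1), (vs @ [i]) ! k))"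
    unfolding path_weight_def using assms by simp
  also have "\<dots> = A $$ (i, last vs) * path_weight A vs"
    unfolding prod.lessThan_Suc path_weight_def using assms
    by (auto simp: nth_append last_conv_nth intro!: prod.cong)
  finally show ?thesis .
qed

lemma dpath_butlastE:
  assumes "is_dpath N A u i vs" "path_len vs = Suc m"
  obtains ws j where "vs = ws @ [i]" "is_dpath N A u j ws" "path_len ws = m" "A $$ (i, j) > 0" "j < N"
proof -
  have len: "length vs = Suc (Suc m)" using assms(2) unfolding path_len_def by simp
  define ws where "ws = take (Suc m) vs"
  have vs: "vs = ws @ [i]"
    using assms(1) len unfolding ws_def is_dpath_def
    by (metis append_butlast_last_id butlast_conv_take diff_Suc_1)
  have ws: "is_dpath N A u (vs ! m) ws" using dpath_take[OF assms(1)] len unfolding ws_def by simp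
  have "A $$ (vs ! Suc m, vs ! m) > 0" using assms(1) len unfolding is_dpath_def by auto
  moreover have "length ws = Suc m" using len unfolding ws_def by simp
  hence "vs ! Suc m = i" by (metis vs nth_append_length)
  moreover have "vs ! m \<in> set vs" using len by simp
  hence "vs ! m < N" using assms(1) unfolding is_dpath_def by auto
  ultimately show ?thesis using that vs ws len unfolding ws_def path_len_def by simp
qed

lemma dpath_not_mem_if_shorter:
  assumes "is_dpath N A u j vs" "\<And>ws. is_dpath N A u i ws \<Longrightarrow> path_len vs < path_len ws"
  shows "i \<notin> set vs"
proof
  assume "i \<in> set vs"
  then obtain k where k: "k < length vs" "vs ! k = i" by (auto simp: in_set_conv_nth)
  with dpath_take[OF assms(1) k(1)] assms(2) have "path_len vs < path_len (take (Suc k) vs)"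
    by simp
  with k show False unfolding path_len_def by auto
qed

lemma path_weight_pos: "is_dpath N A u w vs \<Longrightarrow> path_weight A vs > 0"
  unfolding is_dpath_def path_weight_def by (auto intro!: prod_pos)

definition dpaths :: "nat \<Rightarrow> real mat \<Rightarrow> nat \<Rightarrow> nat \<Rightarrow> nat \<Rightarrow> nat list set" where
  "dpaths N A u w l = {vs. is_dpath N A u w vs \<and> path_len vs = l}"

definition dpath_weight_sum :: "nat \<Rightarrow> real mat \<Rightarrow> nat \<Rightarrow> nat \<Rightarrow> nat \<Rightarrow> real" where
  "dpath_weight_sum N A u w l = (\<Sum>vs\<in>dpaths N A u w l. path_weight A vs)"

lemma finite_dpaths: "finite (dpaths N A u w l)"
proof -
  have "dpaths N A u w l \<subseteq> {xs. set xs \<subseteq> {..<N} \<and> length xs \<le> N}"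
    using dpath_length_le unfolding dpaths_def is_dpath_def by blast
  thus ?thesis using finite_lists_length_le[of "{..<N}" N] finite_subset by blast
qed

lemma shortest_weight_sum_eq:
  "shortest_weight_sum N A u w = dpath_weight_sum N A u w (shortest_dist N A u w)"
  unfolding shortest_weight_sum_def dpath_weight_sum_def dpaths_def ..

lemma dpath_weight_sum_0: "u < N \<Longrightarrow> dpath_weight_sum N A u w 0 = (if w = u then 1 else 0)"
proof -
  assume "u < N"
  hence "dpaths N A u w 0 = (if w = u then {[u]} else {})"
    unfolding dpaths_def is_dpath_def path_len_def by (auto simp: length_Suc_conv le_Suc_eq)
  thus ?thesis unfolding dpath_weight_sum_def by (simp add: path_weight_def)
qed

lemma dpath_weight_sum_eq_0:
  assumes "\<And>vs. is_dpath N A u w vs \<Longrightarrow> l < path_len vs"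
  shows "dpath_weight_sum N A u w l = 0"
proof -
  have "dpaths N A u w l = {}" unfolding dpaths_def using assms by fastforce
  thus ?thesis unfolding dpath_weight_sum_def by simp
qed

lemma dpath_weight_sum_pos:
  assumes "is_dpath N A u w vs" shows "dpath_weight_sum N A u w (path_len vs) > 0"
proof -
  have "vs \<in> dpaths N A u w (path_len vs)" using assms unfolding dpaths_def by simp
  moreover have "path_weight A ws > 0" if "ws \<in> dpaths N A u w (path_len vs)" for ws
    using that path_weight_pos unfolding dpaths_def by blast
  ultimately show ?thesis unfolding dpath_weight_sum_def
    by (intro sum_pos2[OF finite_dpaths]) (auto simp: less_imp_le)
qed

lemma dpaths_Suc:
  assumes "i < N" "\<And>vs. is_dpath N A u i vs \<Longrightarrow> m < path_len vs"
  shows "dpaths N A u i (Suc m) =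
    (\<lambda>vs. vs @ [i]) ` (\<Union>j\<in>{j. j < N \<and> A $$ (i, j) > 0}. dpaths N A u j m)"
proof (intro equalityI subsetI)
  fix vs assume "vs \<in> dpaths N A u i (Suc m)"
  then obtain ws j where "vs = ws @ [i]" "is_dpath N A u j ws" "path_len ws = m" "A $$ (i, j) > 0" "j < N"
    unfolding dpaths_def by (auto elim: dpath_butlastE)
  then show "vs \<in> (\<lambda>vs. vs @ [i]) ` (\<Union>j\<in>{j. j < N \<and> A $$ (i, j) > 0}. dpaths N A u j m)"
    unfolding dpaths_def by auto
next
  fix vs assume "vs \<in> (\<lambda>vs. vs @ [i]) ` (\<Union>j\<in>{j. j < N \<and> A $$ (i, j) > 0}. dpaths N A u j m)"
  then obtain ws j where ws: "vs = ws @ [i]" "is_dpath N A u j ws" "path_len ws = m" "A $$ (i, j) > 0"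
    unfolding dpaths_def by auto
  have "i \<notin> set ws" using dpath_not_mem_if_shorter[OF ws(2)] assms(2) ws(3) by blast
  with ws assms(1) have "is_dpath N A u i vs" using dpath_snoc by blast
  moreover have "ws \<noteq> []" using ws(2) unfolding is_dpath_def by simp
  ultimately show "vs \<in> dpaths N A u i (Suc m)"
    using ws unfolding dpaths_def path_len_def by (auto simp: neq_Nil_conv)
qed

lemma dpath_weight_sum_Suc:
  assumes nonneg: "\<forall>i<N. \<forall>j<N. A $$ (i, j) \<ge> 0"
    and "i < N" and longer: "\<And>vs. is_dpath N A u i vs \<Longrightarrow> m < path_len vs"
  shows "dpath_weight_sum N A u i (Suc m) = (\<Sum>j<N. A $$ (i, j) * dpath_weight_sum N A u j m)"
proof -
  define J where "J = {j. j < N \<and> A $$ (i, j) > 0}"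
  have weight: "path_weight A (vs @ [i]) = A $$ (i, j) * path_weight A vs"
    if "vs \<in> dpaths N A u j m" for vs j
    using that path_weight_snoc[of vs A i] unfolding dpaths_def is_dpath_def by auto
  have split: "dpaths N A u i (Suc m) = (\<lambda>vs. vs @ [i]) ` (\<Union>j\<in>J. dpaths N A u j m)"
    unfolding J_def by (rule dpaths_Suc[OF assms(2) longer])
  have "dpath_weight_sum N A u i (Suc m) = (\<Sum>vs\<in>(\<Union>j\<in>J. dpaths N A u j m). path_weight A (vs @ [i]))"
    unfolding dpath_weight_sum_def split by (subst sum.reindex) (auto simp: inj_on_def)
  also have "\<dots> = (\<Sum>j\<in>J. \<Sum>vs\<in>dpaths N A u j m. path_weight A (vs @ [i]))"
    by (rule sum.UNION_disjoint) (simp_all add: J_def finite_dpaths, auto simp: dpaths_def is_dpath_def)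
  also have "\<dots> = (\<Sum>j\<in>J. \<Sum>vs\<in>dpaths N A u j m. A $$ (i, j) * path_weight A vs)"
    using weight by simp
  also have "\<dots> = (\<Sum>j<N. A $$ (i, j) * dpath_weight_sum N A u j m)"
    unfolding dpath_weight_sum_def sum_distrib_left[symmetric]
    by (rule sum.mono_neutral_left) (use nonneg assms(2) in \<open>auto simp: J_def order.order_iff_strict\<close>)
  finally show ?thesis .
qed

section \<open>Powers of the Laplacian count shortest paths\<close>

lemma pow_mat_Suc_left: "B \<in> carrier_mat n n \<Longrightarrow> B ^\<^sub>m Suc k = B * B ^\<^sub>m k"
proof (induction k)
  case (Suc k)
  have "B ^\<^sub>m Suc (Suc k) = (B * B ^\<^sub>m k) * B" using Suc by simp
  also have "\<dots> = B * (B ^\<^sub>m k * B)" using Suc.prems by (intro assoc_mult_mat) auto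
  finally show ?case by simp
qed simp

lemma index_mult_mat_sum:
  "X \<in> carrier_mat n n \<Longrightarrow> Y \<in> carrier_mat n n \<Longrightarrow> i < n \<Longrightarrow> j < n \<Longrightarrow>
   (X * Y) $$ (i, j) = (\<Sum>k<n. X $$ (i, k) * Y $$ (k, j))"
  by (simp add: scalar_prod_def atLeast0LessThan)

lemma laplacian_carrier: "A \<in> carrier_mat N N \<Longrightarrow> laplacian A \<in> carrier_mat N N"
  unfolding laplacian_def by auto

lemma laplacian_index: "A \<in> carrier_mat N N \<Longrightarrow> i < N \<Longrightarrow> j < N \<Longrightarrow>
  laplacian A $$ (i, j) = (if i = j then (\<Sum>k<N. A $$ (i, k)) else 0) - A $$ (i, j)"
  unfolding laplacian_def by auto

lemma neg_laplacian_mult_index: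
  assumes A: "A \<in> carrier_mat N N" and B: "B \<in> carrier_mat N N" and "i < N" "j < N"
  shows "(- laplacian A * B) $$ (i, j)
    = (\<Sum>k<N. A $$ (i, k) * B $$ (k, j)) - (\<Sum>k<N. A $$ (i, k)) * B $$ (i, j)"
proof -
  have "(- laplacian A * B) $$ (i, j) = (\<Sum>k<N. (- laplacian A) $$ (i, k) * B $$ (k, j))"
    using assms laplacian_carrier[OF A] by (intro index_mult_mat_sum) auto
  also have "\<dots> = (\<Sum>k<N. A $$ (i, k) * B $$ (k, j)
      - (if i = k then (\<Sum>k<N. A $$ (i, k)) * B $$ (k, j) else 0))"
    using assms laplacian_carrier[OF A]
    by (auto simp: laplacian_index algebra_simps intro!: sum.cong)
  also have "\<dots> = (\<Sum>k<N. A $$ (i, k) * B $$ (k, j)) - (\<Sum>k<N. A $$ (i, k)) * B $$ (i, j)"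
    using assms by (simp add: sum_subtractf)
  finally show ?thesis .
qed

lemma dpath_length_ge_arc:
  assumes "i < N" "A $$ (i, j) > 0" "\<And>ws. is_dpath N A u i ws \<Longrightarrow> Suc m \<le> path_len ws"
    and vs: "is_dpath N A u j vs"
  shows "m \<le> path_len vs"
proof (rule ccontr)
  assume short: "\<not> m \<le> path_len vs"
  hence "i \<notin> set vs" using dpath_not_mem_if_shorter[OF vs] assms(3) by fastforce
  hence "is_dpath N A u i (vs @ [i])" using dpath_snoc[OF vs assms(1)] assms(2) by blast
  with assms(3) short show False unfolding path_len_def by fastforce
qed

text \<open>The length hypothesis makes every walk of length m from u to i a path; along such walks
  the diagonal of the Laplacian never contributes, so the powers of -L count weighted paths.\<close>
lemma neg_laplacian_pow_index:
  assumes A: "A \<in> carrier_mat N N" and nonneg: "\<forall>i<N. \<forall>j<N. A $$ (i, j) \<ge> 0"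
    and "u < N" "i < N" and longer: "\<And>vs. is_dpath N A u i vs \<Longrightarrow> m \<le> path_len vs"
  shows "((- laplacian A) ^\<^sub>m m) $$ (i, u) = dpath_weight_sum N A u i m"
  using assms(4) longer
proof (induction m arbitrary: i)
  case 0
  then show ?case using A \<open>u < N\<close> laplacian_carrier[OF A] by (simp add: dpath_weight_sum_0)
next
  case (Suc m)
  define B where "B = (- laplacian A) ^\<^sub>m m"
  have L: "- laplacian A \<in> carrier_mat N N" and B: "B \<in> carrier_mat N N"
    using laplacian_carrier[OF A] unfolding B_def by auto
  have diagonal: "B $$ (i, u) = 0"
    using Suc.IH[OF Suc.prems(1)] Suc.prems dpath_weight_sum_eq_0[of N A u i m]
    unfolding B_def by fastforce
  have arc: "A $$ (i, j) * B $$ (j, u) = A $$ (i, j) * dpath_weight_sum N A u j m" if "j < N" for j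
  proof (cases "A $$ (i, j) > 0")
    case True
    with that show ?thesis
      unfolding B_def using Suc.IH dpath_length_ge_arc[OF Suc.prems(1) True Suc.prems(2)] by simp
  qed (use nonneg that Suc.prems(1) in \<open>auto simp: order.order_iff_strict\<close>)
  have "((- laplacian A) ^\<^sub>m Suc m) $$ (i, u) = (\<Sum>j<N. A $$ (i, j) * B $$ (j, u))"
    using neg_laplacian_mult_index[OF A B Suc.prems(1) \<open>u < N\<close>] pow_mat_Suc_left[OF L] diagonal
    unfolding B_def by simp
  also have "\<dots> = (\<Sum>j<N. A $$ (i, j) * dpath_weight_sum N A u j m)"
    using arc by (intro sum.cong) simp_all
  also have "\<dots> = dpath_weight_sum N A u i (Suc m)"
    using Suc.prems by (intro dpath_weight_sum_Suc[symmetric, OF nonneg]) fastforce+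
  finally show ?case .
qed

section \<open>The adjugate of sI + L\<close>

lemma sI_plus_carrier: "L \<in> carrier_mat N N \<Longrightarrow> sI_plus L \<in> carrier_mat N N"
  unfolding sI_plus_def by auto

lemma sI_plus_index: "L \<in> carrier_mat N N \<Longrightarrow> i < N \<Longrightarrow> j < N \<Longrightarrow>
  sI_plus L $$ (i, j) = (if i = j then [:0, 1:] else 0) + [:L $$ (i, j):]"
  unfolding sI_plus_def by auto

lemma det_sI_plus: "L \<in> carrier_mat N N \<Longrightarrow> det (sI_plus L) = char_poly (- L)"
  unfolding char_poly_def sI_plus_def char_poly_matrix_def by (intro arg_cong[where f = det] eq_matI) auto

lemma degree_det_sI_plus:
  "L \<in> carrier_mat N N \<Longrightarrow> degree (det (sI_plus L)) = N \<and> coeff (det (sI_plus L)) N = 1"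
  using degree_monic_char_poly[of "- L" N] by (simp add: det_sI_plus)

lemma degree_adj_sI_plus_le:
  assumes L: "L \<in> carrier_mat N N" and "i < N" "j < N"
  shows "degree (adj_mat (sI_plus L) $$ (i, j)) \<le> N - 1"
proof -
  obtain n where N: "N = Suc n" using assms(2) by (cases N) auto
  have S: "sI_plus L \<in> carrier_mat (Suc n) (Suc n)" using sI_plus_carrier[OF L] N by simp
  have "degree (mat_delete (sI_plus L) j i $$ (i', j')) \<le> 1" if "i' < n" "j' < n" for i' j'
  proof -
    have "insert_index j i' < N" "insert_index i j' < N" using that N by (auto simp: insert_index_def)
    then show ?thesis using that assms(2,3) N L
      by (auto simp: mat_delete_index[OF S, symmetric] sI_plus_index degree_add_le)
  qed
  hence "degree (det (mat_delete (sI_plus L) j i)) \<le> n"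
    using degree_det_le[of n "mat_delete (sI_plus L) j i" 1] mat_delete_carrier[OF S] by simp
  moreover have "degree ((- 1 :: real poly) ^ k * p) = degree p" for k p
    by (cases "even k") simp_all
  ultimately show ?thesis
    using assms S N by (simp add: adj_mat_def cofactor_def)
qed

lemma coeff_adj_sI_plus_rec:
  assumes L: "L \<in> carrier_mat N N" and "i < N" "j < N"
  shows "coeff (adj_mat (sI_plus L) $$ (i, j)) m
     + (\<Sum>k<N. L $$ (i, k) * coeff (adj_mat (sI_plus L) $$ (k, j)) (Suc m))
     = (if i = j then coeff (det (sI_plus L)) (Suc m) else 0)"
proof -
  define S where "S = sI_plus L"
  define H where "H = adj_mat S"
  have S: "S \<in> carrier_mat N N" unfolding S_def using sI_plus_carrier[OF L] .
  have H: "H \<in> carrier_mat N N" unfolding H_def using adj_mat(1)[OF S] .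
  have "(S * H) $$ (i, j) = (det S \<cdot>\<^sub>m 1\<^sub>m N) $$ (i, j)"
    unfolding H_def using adj_mat(2)[OF S] by simp
  hence "(\<Sum>k<N. S $$ (i, k) * H $$ (k, j)) = (if i = j then det S else 0)"
    using index_mult_mat_sum[OF S H assms(2,3)] assms(2,3) by simp
  moreover have "coeff (\<Sum>k<N. S $$ (i, k) * H $$ (k, j)) (Suc m)
      = (\<Sum>k<N. (if i = k then coeff (H $$ (k, j)) m else 0) + L $$ (i, k) * coeff (H $$ (k, j)) (Suc m))"
    unfolding coeff_sum
    by (intro sum.cong refl) (use assms L in \<open>auto simp: S_def sI_plus_index distrib_right\<close>)
  ultimately have "(if i = j then coeff (det S) (Suc m) else 0)
      = coeff (H $$ (i, j)) m + (\<Sum>k<N. L $$ (i, k) * coeff (H $$ (k, j)) (Suc m))"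
    using assms(2) by (cases "i = j") (simp_all add: sum.distrib)
  then show ?thesis unfolding H_def S_def by (cases "i = j") simp_all
qed

lemma neg_pow_mat_Suc_index:
  fixes L :: "'a :: ring_1 mat"
  assumes L: "L \<in> carrier_mat N N" and "i < N" "j < N"
  shows "((- L) ^\<^sub>m Suc n) $$ (i, j) = - (\<Sum>t<N. L $$ (i, t) * ((- L) ^\<^sub>m n) $$ (t, j))"
proof -
  have L': "- L \<in> carrier_mat N N" using L by simp
  have "((- L) ^\<^sub>m Suc n) $$ (i, j) = (\<Sum>t<N. (- L) $$ (i, t) * ((- L) ^\<^sub>m n) $$ (t, j))"
    unfolding pow_mat_Suc_left[OF L'] using assms by (intro index_mult_mat_sum) auto
  also have "\<dots> = (\<Sum>t<N. - (L $$ (i, t) * ((- L) ^\<^sub>m n) $$ (t, j)))"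
    using assms by (intro sum.cong) auto
  also have "\<dots> = - (\<Sum>t<N. L $$ (i, t) * ((- L) ^\<^sub>m n) $$ (t, j))"
    by (rule sum_negf)
  finally show ?thesis .
qed

lemma coeff_adj_sI_plus:
  assumes L: "L \<in> carrier_mat N N" and "k < N" "i < N" "j < N"
  shows "coeff (adj_mat (sI_plus L) $$ (i, j)) (N - 1 - k)
    = (\<Sum>l\<le>k. coeff (det (sI_plus L)) (N - l) * ((- L) ^\<^sub>m (k - l)) $$ (i, j))"
  using assms(2-4)
proof (induction k arbitrary: i j)
  case 0
  have "coeff (adj_mat (sI_plus L) $$ (t, j)) N = 0" if "t < N" for t
    using degree_adj_sI_plus_le[OF L that 0(3)] 0 by (intro coeff_eq_0) linarith
  then show ?case
    using coeff_adj_sI_plus_rec[OF L 0(2,3), of "N - 1"] degree_det_sI_plus[OF L] 0 L by simp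
next
  case (Suc k)
  let ?e = "\<lambda>l. coeff (det (sI_plus L)) (N - l)"
  have e: "Suc (N - 1 - Suc k) = N - 1 - k" "N - 1 - k = N - Suc k" using Suc.prems by simp_all
  have "coeff (adj_mat (sI_plus L) $$ (i, j)) (N - 1 - Suc k) = (if i = j then ?e (Suc k) else 0)
      - (\<Sum>t<N. L $$ (i, t) * coeff (adj_mat (sI_plus L) $$ (t, j)) (N - 1 - k))"
    using coeff_adj_sI_plus_rec[OF L Suc.prems(2,3), of "N - 1 - Suc k"] unfolding e by simp
  also have "(\<Sum>t<N. L $$ (i, t) * coeff (adj_mat (sI_plus L) $$ (t, j)) (N - 1 - k))
      = (\<Sum>t<N. L $$ (i, t) * (\<Sum>l\<le>k. ?e l * ((- L) ^\<^sub>m (k - l)) $$ (t, j)))"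
    using Suc by (intro sum.cong refl) simp
  also have "(\<Sum>t<N. L $$ (i, t) * (\<Sum>l\<le>k. ?e l * ((- L) ^\<^sub>m (k - l)) $$ (t, j)))
     = (\<Sum>l\<le>k. ?e l * (\<Sum>t<N. L $$ (i, t) * ((- L) ^\<^sub>m (k - l)) $$ (t, j)))"
    by (simp add: sum_distrib_left sum.swap[of _ "{..<N}"] mult.left_commute)
  also have "\<dots> = (\<Sum>l\<le>k. - (?e l * ((- L) ^\<^sub>m (Suc k - l)) $$ (i, j)))"
  proof (intro sum.cong refl)
    fix l assume "l \<in> {..k}"
    hence "Suc k - l = Suc (k - l)" by simp
    show "?e l * (\<Sum>t<N. L $$ (i, t) * ((- L) ^\<^sub>m (k - l)) $$ (t, j))
      = - (?e l * ((- L) ^\<^sub>m (Suc k - l)) $$ (i, j))"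
      unfolding \<open>Suc k - l = Suc (k - l)\<close> neg_pow_mat_Suc_index[OF L Suc.prems(2,3)] by simp
  qed
  also have "\<dots> = - (\<Sum>l\<le>k. ?e l * ((- L) ^\<^sub>m (Suc k - l)) $$ (i, j))"
    by (rule sum_negf)
  also have "(if i = j then ?e (Suc k) else 0) = ?e (Suc k) * ((- L) ^\<^sub>m (Suc k - Suc k)) $$ (i, j)"
    using Suc.prems L by simp
  finally show ?case by (simp add: add.commute)
qed

section \<open>Degree and leading coefficient of the (d, c) cofactor\<close>

lemma shortest_dist_le: "is_dpath N A u w vs \<Longrightarrow> shortest_dist N A u w \<le> path_len vs"
  unfolding shortest_dist_def by (rule Least_le) auto

context
  fixes N :: nat and A :: "real mat" and c d :: nat
  assumes A_dim: "A \<in> carrier_mat N N"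
    and A_nonneg: "\<forall>i<N. \<forall>j<N. A $$ (i, j) \<ge> 0"
    and c_lt: "c < N" and d_lt: "d < N"
    and reach: "\<exists>vs. is_dpath N A c d vs"
begin

lemma shortest_dpath_exists:
  obtains vs where "is_dpath N A c d vs" "path_len vs = shortest_dist N A c d"
  using LeastI_ex[of "\<lambda>l. \<exists>vs. is_dpath N A c d vs \<and> path_len vs = l"] reach that
  unfolding shortest_dist_def by blast

lemma shortest_dist_less: "shortest_dist N A c d < N"
proof -
  obtain vs where "is_dpath N A c d vs" "path_len vs = shortest_dist N A c d"
    by (rule shortest_dpath_exists)
  with dpath_length_le[of N A c d vs] c_lt show ?thesis unfolding path_len_def by linarith
qed

lemma shortest_weight_sum_pos: "shortest_weight_sum N A c d > 0"
  using dpath_weight_sum_pos shortest_dpath_exists unfolding shortest_weight_sum_eq by metis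

lemma neg_laplacian_pow_index_upto_shortest:
  assumes "m \<le> shortest_dist N A c d"
  shows "((- laplacian A) ^\<^sub>m m) $$ (d, c) = dpath_weight_sum N A c d m"
  using assms shortest_dist_le
  by (intro neg_laplacian_pow_index[OF A_dim A_nonneg c_lt d_lt]) (meson le_trans)

lemma neg_laplacian_pow_index_below_shortest:
  assumes "m < shortest_dist N A c d"
  shows "((- laplacian A) ^\<^sub>m m) $$ (d, c) = 0"
  using assms neg_laplacian_pow_index_upto_shortest shortest_dist_le
  by (simp add: dpath_weight_sum_eq_0 order.strict_trans2)

lemma coeff_adj_laplacian_below_shortest:
  assumes "k < shortest_dist N A c d"
  shows "coeff (adj_mat (sI_plus (laplacian A)) $$ (d, c)) (N - 1 - k) = 0"
proof -
  have "k < N" using assms shortest_dist_less by simp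
  with assms show ?thesis
    using coeff_adj_sI_plus[OF laplacian_carrier[OF A_dim] _ d_lt c_lt, of k]
    by (simp add: neg_laplacian_pow_index_below_shortest)
qed

lemma coeff_adj_laplacian_shortest:
  "coeff (adj_mat (sI_plus (laplacian A)) $$ (d, c)) (N - 1 - shortest_dist N A c d)
     = shortest_weight_sum N A c d"
proof -
  let ?\<delta> = "shortest_dist N A c d" and ?L = "laplacian A"
  let ?t = "\<lambda>l. coeff (det (sI_plus ?L)) (N - l) * ((- ?L) ^\<^sub>m (?\<delta> - l)) $$ (d, c)"
  have L: "?L \<in> carrier_mat N N" using laplacian_carrier[OF A_dim] .
  have rest: "(\<Sum>l\<in>{..?\<delta>} - {0}. ?t l) = 0"
    by (intro sum.neutral) (auto simp: neg_laplacian_pow_index_below_shortest)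
  have "coeff (adj_mat (sI_plus ?L) $$ (d, c)) (N - 1 - ?\<delta>) = (\<Sum>l\<le>?\<delta>. ?t l)"
    using coeff_adj_sI_plus[OF L shortest_dist_less d_lt c_lt] .
  also have "\<dots> = ?t 0"
    by (subst sum.remove[of _ 0]) (auto simp: rest)
  also have "\<dots> = shortest_weight_sum N A c d"
    using degree_det_sI_plus[OF L]
    by (simp add: neg_laplacian_pow_index_upto_shortest shortest_weight_sum_eq)
  finally show ?thesis .
qed

lemma degree_adj_laplacian:
  "degree (adj_mat (sI_plus (laplacian A)) $$ (d, c)) = N - 1 - shortest_dist N A c d"
proof (rule antisym)
  let ?h = "adj_mat (sI_plus (laplacian A)) $$ (d, c)"
  show "degree ?h \<le> N - 1 - shortest_dist N A c d"
  proof (rule degree_le, intro allI impI)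
    fix m assume m: "N - 1 - shortest_dist N A c d < m"
    show "coeff ?h m = 0"
    proof (cases "N \<le> m")
      case True
      then show ?thesis using degree_adj_sI_plus_le[OF laplacian_carrier[OF A_dim] d_lt c_lt] d_lt
        by (intro coeff_eq_0) linarith
    next
      case False
      then show ?thesis
        using m coeff_adj_laplacian_below_shortest[of "N - 1 - m"] by (simp add: Suc_diff_Suc)
    qed
  qed
  show "N - 1 - shortest_dist N A c d \<le> degree ?h"
    using coeff_adj_laplacian_shortest shortest_weight_sum_pos by (intro le_degree) simp
qed

lemma lead_coeff_adj_laplacian:
  "lead_coeff (adj_mat (sI_plus (laplacian A)) $$ (d, c)) = shortest_weight_sum N A c d"
  using degree_adj_laplacian coeff_adj_laplacian_shortest by simp

end

section \<open>Evaluating polynomials in the field of rational functions\<close>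

definition const_fract :: "'a :: idom \<Rightarrow> 'a poly fract" where
  "const_fract z = to_fract [:z:]"

lemma comm_ring_hom_const_fract: "comm_ring_hom const_fract"
  by unfold_locales (simp_all add: const_fract_def flip: to_fract_add to_fract_mult one_pCons)

lemma comm_ring_hom_poly_map_poly:
  assumes "comm_ring_hom h" shows "comm_ring_hom (\<lambda>f. poly (map_poly h f) x)"
proof -
  interpret h: comm_ring_hom h by fact
  interpret m: map_poly_comm_ring_hom h ..
  show ?thesis by unfold_locales (simp_all add: m.hom_add m.hom_mult)
qed

definition eval_fract :: "'a :: idom poly fract \<Rightarrow> 'a poly \<Rightarrow> 'a poly fract" where
  "eval_fract x f = poly (map_poly const_fract f) x"

lemma comm_ring_hom_eval_fract: "comm_ring_hom (eval_fract x)"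
  unfolding eval_fract_def[abs_def] by (rule comm_ring_hom_poly_map_poly[OF comm_ring_hom_const_fract])

lemma eval_fract_pCons: "eval_fract x (pCons z p) = const_fract z + x * eval_fract x p"
proof -
  interpret comm_ring_hom const_fract by (rule comm_ring_hom_const_fract)
  show ?thesis by (simp add: eval_fract_def map_poly_pCons_hom)
qed

lemma eval_fract_linear: "eval_fract x [:z, 1:] = x + const_fract z"
proof -
  interpret e: comm_ring_hom "eval_fract x" by (rule comm_ring_hom_eval_fract)
  interpret c: comm_ring_hom const_fract by (rule comm_ring_hom_const_fract)
  show ?thesis using e.hom_zero by (simp add: eval_fract_pCons add.commute)
qed

lemma eval_fract_prod_linear: "eval_fract x (\<Prod>z\<leftarrow>zs. [:z, 1:]) = (\<Prod>z\<leftarrow>zs. x + const_fract z)"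
proof -
  interpret comm_ring_hom "eval_fract x" by (rule comm_ring_hom_eval_fract)
  show ?thesis unfolding hom_prod_list by (simp add: o_def eval_fract_linear)
qed

definition eval_real_fract :: "complex poly fract \<Rightarrow> real poly \<Rightarrow> complex poly fract" where
  "eval_real_fract x f = eval_fract x (map_poly complex_of_real f)"

lemma comm_ring_hom_eval_real_fract: "comm_ring_hom (eval_real_fract x)"
proof -
  interpret e: comm_ring_hom "eval_fract x" by (rule comm_ring_hom_eval_fract)
  interpret m: map_poly_comm_ring_hom "complex_of_real" ..
  show ?thesis
    by unfold_locales (simp_all add: eval_real_fract_def m.hom_add m.hom_mult e.hom_add e.hom_mult)
qed

lemma rf_const: "rf [:r:] = const_fract (complex_of_real r)"
  by (simp add: rf_def const_fract_def to_fract_def of_real_hom.map_poly_pCons_hom)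

lemma cf_const: "cf [:z:] = const_fract z"
  by (simp add: cf_def const_fract_def to_fract_def)

lemma eval_real_fract_pCons: "eval_real_fract x (pCons r p) = rf [:r:] + x * eval_real_fract x p"
  by (simp add: eval_real_fract_def of_real_hom.map_poly_pCons_hom eval_fract_pCons rf_const)

lemma eval_real_fract_sI_plus:
  "L \<in> carrier_mat N N \<Longrightarrow>
   map_mat (eval_real_fract x) (sI_plus L) = x \<cdot>\<^sub>m 1\<^sub>m N + map_mat (\<lambda>r. rf [:r:]) L"
proof -
  interpret e: comm_ring_hom "eval_real_fract x" by (rule comm_ring_hom_eval_real_fract)
  interpret c: comm_ring_hom const_fract by (rule comm_ring_hom_const_fract)
  show "L \<in> carrier_mat N N \<Longrightarrow> ?thesis"
    by (rule eq_matI) (auto simp: sI_plus_def eval_real_fract_pCons one_pCons rf_const)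
qed

lemma (in comm_ring_hom) hom_adj_mat: "map_mat hom (adj_mat A) = adj_mat (map_mat hom A)"
proof -
  have delete: "map_mat hom (mat_delete A i j) = mat_delete (map_mat hom A) i j" for i j
    unfolding mat_delete_def by (rule eq_matI) (auto simp: insert_index_def)
  show ?thesis
    unfolding adj_mat_def cofactor_def
    by (rule eq_matI) (auto simp: hom_mult hom_power hom_uminus delete simp flip: hom_det)
qed

lemma smult_right_inverse_index:
  fixes P X :: "'a :: field mat"
  assumes P: "P \<in> carrier_mat n n" and X: "X \<in> carrier_mat n n"
    and inv: "(M \<cdot>\<^sub>m P) * X = 1\<^sub>m n" and "i < n" "j < n"
  shows "M * X $$ (i, j) = adj_mat P $$ (i, j) / det P"
proof -
  have H: "adj_mat P \<in> carrier_mat n n" using adj_mat(1)[OF P] .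
  have "det (M \<cdot>\<^sub>m P) * det X = 1"
    using det_mult[of "M \<cdot>\<^sub>m P" n X] inv P X by simp
  hence "det P \<noteq> 0" using P by auto
  have "adj_mat P = adj_mat P * ((M \<cdot>\<^sub>m P) * X)" using inv H by simp
  also have "\<dots> = (adj_mat P * (M \<cdot>\<^sub>m P)) * X" using H P X by (simp add: assoc_mult_mat[of _ n n _ n _ n])
  also have "adj_mat P * (M \<cdot>\<^sub>m P) = (M * det P) \<cdot>\<^sub>m 1\<^sub>m n"
    using mult_smult_distrib[OF H P, of M] adj_mat(3)[OF P] by auto
  also have "((M * det P) \<cdot>\<^sub>m 1\<^sub>m n) * X = (M * det P) \<cdot>\<^sub>m X"
    using X by (simp add: mult_smult_assoc_mat[OF one_carrier_mat X])
  finally have "adj_mat P $$ (i, j) = M * det P * X $$ (i, j)" using X assms(4,5) by simp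
  with \<open>det P \<noteq> 0\<close> show ?thesis by (simp add: field_simps)
qed

lemma length_char_poly_linear_factors:
  assumes "L \<in> carrier_mat N N"
    and "map_poly complex_of_real (char_poly L) = (\<Prod>l\<leftarrow>ls. [:- l, 1:])"
  shows "length ls = N"
proof -
  have "degree (map_poly complex_of_real (char_poly L)) = N"
    using degree_monic_char_poly[OF assms(1)] by simp
  thus ?thesis using assms(2) degree_linear_factors[of uminus ls] by simp
qed

text \<open>det(xI + L) = (-1)^N char_poly L (-x).\<close>
lemma eval_real_fract_det_sI_plus:
  assumes L: "L \<in> carrier_mat N N"
    and cp: "map_poly complex_of_real (char_poly L) = (\<Prod>l\<leftarrow>ls. [:- l, 1:])"
  shows "eval_real_fract x (det (sI_plus L)) = (\<Prod>l\<leftarrow>ls. x + const_fract l)"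
proof -
  interpret e: comm_ring_hom "eval_real_fract (- x)" by (rule comm_ring_hom_eval_real_fract)
  interpret c: comm_ring_hom const_fract by (rule comm_ring_hom_const_fract)
  define P where "P = map_mat (eval_real_fract x) (sI_plus L)"
  have P: "P \<in> carrier_mat N N" unfolding P_def using sI_plus_carrier[OF L] by simp
  have "map_mat (eval_real_fract (- x)) (char_poly_matrix L) = (- 1) \<cdot>\<^sub>m P"
    unfolding P_def eval_real_fract_sI_plus[OF L] using L
    by (intro eq_matI) (auto simp: char_poly_matrix_def
        eval_real_fract_pCons rf_const c.hom_uminus one_pCons)
  hence "(- 1) ^ N * det P = eval_real_fract (- x) (char_poly L)"
    unfolding char_poly_def e.hom_det[symmetric] using P by simp
  also have "\<dots> = (\<Prod>l\<leftarrow>ls. - x + const_fract (- l))"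
    unfolding eval_real_fract_def cp
    using eval_fract_prod_linear[of "- x" "map uminus ls"] by (simp add: o_def)
  also have "\<dots> = (- 1) ^ length ls * (\<Prod>l\<leftarrow>ls. x + const_fract l)"
    by (induction ls) (simp_all add: c.hom_uminus algebra_simps)
  finally have "(- 1) ^ N * det P = (- 1) ^ N * (\<Prod>l\<leftarrow>ls. x + const_fract l)"
    using length_char_poly_linear_factors[OF L cp] by simp
  then show ?thesis
    unfolding P_def comm_ring_hom.hom_det[OF comm_ring_hom_eval_real_fract] by simp
qed

lemma real_poly_linear_factorization:
  fixes h :: "real poly"
  obtains gs where "length gs = degree h"
    "map_poly complex_of_real h = Polynomial.smult (complex_of_real (lead_coeff h)) (\<Prod>g\<leftarrow>gs. [:g, 1:])"
proof -
  obtain zs where zs: "Polynomial.smult (lead_coeff (map_poly complex_of_real h)) (\<Prod>z\<leftarrow>zs. [:- z, 1:])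
      = map_poly complex_of_real h" "length zs = degree (map_poly complex_of_real h)"
    using fundamental_theorem_algebra_factorized by blast
  have "(\<Prod>g\<leftarrow>map uminus zs. [:g, 1:]) = (\<Prod>z\<leftarrow>zs. [:- z, 1:])" by (simp add: o_def)
  with zs show ?thesis by (intro that[of "map uminus zs"]) simp_all
qed

lemma eval_real_fract_linear_factorization:
  assumes "map_poly complex_of_real h = Polynomial.smult a (\<Prod>g\<leftarrow>gs. [:g, 1:])"
  shows "eval_real_fract x h = const_fract a * (\<Prod>g\<leftarrow>gs. x + const_fract g)"
proof -
  interpret comm_ring_hom "eval_fract x" by (rule comm_ring_hom_eval_fract)
  have "eval_fract x (Polynomial.smult a P) = const_fract a * eval_fract x P" for P
    using eval_fract_pCons[of x a 0] hom_mult[of "[:a:]" P] by simp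
  then show ?thesis unfolding eval_real_fract_def assms by (simp add: eval_fract_prod_linear)
qed

lemma prod_list_add_divide:
  fixes v :: "'a :: field"
  assumes "v \<noteq> 0"
  shows "(\<Prod>z\<leftarrow>zs. u / v + f z) = (\<Prod>z\<leftarrow>zs. u + f z * v) / v ^ length zs"
  using assms by (induction zs) (auto simp: field_simps)

lemma ratio_prod_list_add_divide:
  fixes v :: "'a :: field"
  assumes "v \<noteq> 0" and "length ls = length gs + (1 + k)"
  shows "t * (\<Prod>g\<leftarrow>gs. u / v + f g) / (\<Prod>l\<leftarrow>ls. u / v + f l)
     = t * v ^ (1 + k) * (\<Prod>g\<leftarrow>gs. u + f g * v) / (\<Prod>l\<leftarrow>ls. u + f l * v)"
proof (cases "(\<Prod>l\<leftarrow>ls. u + f l * v) = 0")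
  case False
  with assms show ?thesis
    unfolding prod_list_add_divide[OF assms(1)] by (simp add: power_add field_simps)
next
  case True
  have "(\<Prod>l\<leftarrow>ls. u / v + f l) = 0"
    unfolding prod_list_add_divide[OF assms(1)] True by simp
  with True show ?thesis by (simp del: prod_list_zero_iff)
qed

text \<open>I + M L = M (xI + L) for x = 1/M, so M (I + M L)\<inverse> = (xI + L)\<inverse> = adj(xI + L) / det(xI + L).\<close>
lemma transfer_entry_eq_adj_div_det:
  assumes L: "L \<in> carrier_mat N N" and "u \<noteq> 0" "v \<noteq> 0"
    and X: "X \<in> carrier_mat N N" "(1\<^sub>m N + (v / u) \<cdot>\<^sub>m map_mat (\<lambda>r. rf [:r:]) L) * X = 1\<^sub>m N"
    and "i < N" "j < N"
  shows "unit_vec N i \<bullet> (X *\<^sub>v ((v / u) \<cdot>\<^sub>v unit_vec N j))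
    = eval_real_fract (u / v) (adj_mat (sI_plus L) $$ (i, j)) / eval_real_fract (u / v) (det (sI_plus L))"
proof -
  interpret e: comm_ring_hom "eval_real_fract (u / v)" by (rule comm_ring_hom_eval_real_fract)
  define P where "P = map_mat (eval_real_fract (u / v)) (sI_plus L)"
  have P: "P \<in> carrier_mat N N" unfolding P_def using sI_plus_carrier[OF L] by simp
  have "(v / u) \<cdot>\<^sub>m P = 1\<^sub>m N + (v / u) \<cdot>\<^sub>m map_mat (\<lambda>r. rf [:r:]) L"
    unfolding P_def eval_real_fract_sI_plus[OF L] using L assms(2,3)
    by (intro eq_matI) (auto simp: field_simps)
  with X(2) have "((v / u) \<cdot>\<^sub>m P) * X = 1\<^sub>m N" by simp
  hence "v / u * X $$ (i, j) = adj_mat P $$ (i, j) / det P"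
    by (rule smult_right_inverse_index[OF P X(1) _ assms(6,7)])
  moreover have "unit_vec N i \<bullet> (X *\<^sub>v ((v / u) \<cdot>\<^sub>v unit_vec N j)) = v / u * X $$ (i, j)"
    using X(1) assms(6,7) by simp
  ultimately show ?thesis
    unfolding P_def e.hom_adj_mat[symmetric] e.hom_det
    using assms(6,7) adj_mat(1)[OF sI_plus_carrier[OF L]] by simp
qed

lemma transfer_entry_factorized:
  assumes L: "L \<in> carrier_mat N N" and "u \<noteq> 0" "v \<noteq> 0" and "i < N" "j < N"
    and X: "X \<in> carrier_mat N N" "(1\<^sub>m N + (v / u) \<cdot>\<^sub>m map_mat (\<lambda>r. rf [:r:]) L) * X = 1\<^sub>m N"
    and cp: "map_poly complex_of_real (char_poly L) = (\<Prod>l\<leftarrow>ls. [:- l, 1:])"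
    and h: "map_poly complex_of_real (adj_mat (sI_plus L) $$ (i, j))
      = Polynomial.smult t (\<Prod>g\<leftarrow>gs. [:g, 1:])"
    and len: "length gs + (1 + k) = N"
  shows "unit_vec N i \<bullet> (X *\<^sub>v ((v / u) \<cdot>\<^sub>v unit_vec N j))
    = const_fract t * v ^ (1 + k) * (\<Prod>g\<leftarrow>gs. u + const_fract g * v)
      / (\<Prod>l\<leftarrow>ls. u + const_fract l * v)"
proof -
  have "unit_vec N i \<bullet> (X *\<^sub>v ((v / u) \<cdot>\<^sub>v unit_vec N j))
      = const_fract t * (\<Prod>g\<leftarrow>gs. u / v + const_fract g) / (\<Prod>l\<leftarrow>ls. u / v + const_fract l)"
    unfolding transfer_entry_eq_adj_div_det[OF L assms(2,3) X assms(4,5)]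
      eval_real_fract_linear_factorization[OF h] eval_real_fract_det_sI_plus[OF L cp] ..
  also have "\<dots> = const_fract t * v ^ (1 + k) * (\<Prod>g\<leftarrow>gs. u + const_fract g * v)
      / (\<Prod>l\<leftarrow>ls. u + const_fract l * v)"
    using length_char_poly_linear_factors[OF L cp] len
    by (intro ratio_prod_list_add_divide \<open>v \<noteq> 0\<close>) simp
  finally show ?thesis .
qed

theorem theorem1:
  fixes N :: nat and A :: "real mat" and a b p q :: "real poly" and c d :: nat
  assumes A_dim: "A \<in> carrier_mat N N"
    and A_nonneg: "\<forall>i<N. \<forall>j<N. A $$ (i, j) \<ge> 0"
    and A_noloop: "\<forall>i<N. A $$ (i, i) = 0"
    and nz: "a \<noteq> 0" "b \<noteq> 0" "p \<noteq> 0" "q \<noteq> 0"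
    and co: "c < N" "d < N"
    and reach: "\<exists>vs. is_dpath N A c d vs"
  defines "L \<equiv> laplacian A"
    and "\<delta> \<equiv> shortest_dist N A c d"
    and "\<theta> \<equiv> shortest_weight_sum N A c d"
    and "h \<equiv> adj_mat (sI_plus (laplacian A)) $$ (d, c)"
    and "M \<equiv> rf (b * q) / rf (a * p)"
  shows "degree h = N - 1 - \<delta> \<and> lead_coeff h = \<theta> \<and>
    (\<exists>gs :: complex list. length gs = N - 1 - \<delta> \<and>
       map_poly complex_of_real h = Polynomial.smult (complex_of_real \<theta>) (\<Prod>g\<leftarrow>gs. [:g, 1:]) \<and>
       (\<forall>ls :: complex list. map_poly complex_of_real (char_poly L) = (\<Prod>l\<leftarrow>ls. [:-l, 1:]) \<longrightarrow>
         (\<forall>X. X \<in> carrier_mat N N \<longrightarrow>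
              (1\<^sub>m N + M \<cdot>\<^sub>m map_mat (\<lambda>x. rf [:x:]) L) * X = 1\<^sub>m N \<longrightarrow>
              unit_vec N d \<bullet> (X *\<^sub>v (M \<cdot>\<^sub>v unit_vec N c)) =
                rf [:\<theta>:] * rf (b * q) ^ (1 + \<delta>)
                  * (\<Prod>g\<leftarrow>gs. rf (a * p) + cf [:g:] * rf (b * q))
                  / (\<Prod>l\<leftarrow>ls. rf (a * p) + cf [:l:] * rf (b * q)))))"
proof -
  note graph = A_dim A_nonneg co reach
  have deg: "degree h = N - 1 - \<delta>" and lead: "lead_coeff h = \<theta>"
    unfolding h_def \<delta>_def \<theta>_def
    by (rule degree_adj_laplacian[OF graph], rule lead_coeff_adj_laplacian[OF graph])
  obtain gs where "length gs = degree h"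
    "map_poly complex_of_real h = Polynomial.smult (complex_of_real (lead_coeff h)) (\<Prod>g\<leftarrow>gs. [:g, 1:])"
    by (rule real_poly_linear_factorization)
  note gs = this[unfolded lead, unfolded deg]
  show ?thesis
  proof (intro conjI exI[of _ gs] allI impI)
    show "degree h = N - 1 - \<delta>" "lead_coeff h = \<theta>" by (fact deg, fact lead)
    show "length gs = N - 1 - \<delta>"
      "map_poly complex_of_real h = Polynomial.smult (complex_of_real \<theta>) (\<Prod>g\<leftarrow>gs. [:g, 1:])"
      by (fact gs(1), fact gs(2))
  next
    fix ls X
    assume cp: "map_poly complex_of_real (char_poly L) = (\<Prod>l\<leftarrow>ls. [:-l, 1:])"
      and X: "X \<in> carrier_mat N N" "(1\<^sub>m N + M \<cdot>\<^sub>m map_mat (\<lambda>x. rf [:x:]) L) * X = 1\<^sub>m N"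
    have L: "L \<in> carrier_mat N N" unfolding L_def by (rule laplacian_carrier[OF A_dim])
    have "rf (a * p) \<noteq> 0" "rf (b * q) \<noteq> 0" using nz by (simp_all add: rf_def to_fract_def[symmetric])
    moreover have "length gs + (1 + \<delta>) = N" using gs(1) shortest_dist_less[OF graph] by (simp add: \<delta>_def)
    ultimately show "unit_vec N d \<bullet> (X *\<^sub>v (M \<cdot>\<^sub>v unit_vec N c)) =
        rf [:\<theta>:] * rf (b * q) ^ (1 + \<delta>) * (\<Prod>g\<leftarrow>gs. rf (a * p) + cf [:g:] * rf (b * q))
          / (\<Prod>l\<leftarrow>ls. rf (a * p) + cf [:l:] * rf (b * q))"
      using transfer_entry_factorized[OF L _ _ co(2,1) X[unfolded M_def] cp gs(2)[unfolded h_def L_def[symmetric]]]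
      unfolding M_def by (simp add: rf_const cf_const)
  qed
qed

end
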